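(* Let $S$ be a finite set of at least three points in the plane, $v>1$, and $s\in S$. Let $H_s$ be an axis-aligned speed-$v$ highway cross that minimizes $\max_{q\in S}t_{H}(s,q)$ over all axis-aligned speed-$v$ highway crosses $H$. Then the travel-time diameter $\max_{p,q\in S}t_{H_s}(p,q)$ is at most $2\delta_{\mathrm{opt}}$, where $\delta_{\mathrm{opt}}$ is the travel-time diameter of $S$ for an optimal axis-aligned speed-$v$ highway cross.
   Context: The underlying metric is the $L_1$-metric. An axis-aligned highway cross is the union $H$ of a horizontal and a vertical line; one travels with speed $1$ off $H$ ($L_1$-lengths) and with speed $v$ along either line of $H$. The travel time $t_H(p,q)$ is the minimum time of a path from $p$ to $q$; the travel-time diameter of $S$ is $\max_{p,q\in S}t_H(p,q)$, and an optimal highway cross minimizes it. *)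

theory Defs
  imports Complex_Main
begin

type_synonym pt = "real \<times> real"

definition l1 :: "pt \<Rightarrow> pt \<Rightarrow> real" where
  "l1 p q = \<bar>fst p - fst q\<bar> + \<bar>snd p - snd q\<bar>"

text \<open>An axis-aligned highway cross is given by its centre c: it is the union of the
  vertical line x = fst c and the horizontal line y = snd c.
  A segment from p to q lies on the highway iff both endpoints lie on the same line of the cross.\<close>
definition on_same_line :: "pt \<Rightarrow> pt \<Rightarrow> pt \<Rightarrow> bool" where
  "on_same_line c p q \<longleftrightarrow>
     (fst p = fst c \<and> fst q = fst c) \<or> (snd p = snd c \<and> snd q = snd c)"

definition seg_cost :: "real \<Rightarrow> pt \<Rightarrow> pt \<Rightarrow> pt \<Rightarrow> real" where
  "seg_cost v c p q = (if on_same_line c p q then l1 p q / v else l1 p q)"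

definition path_cost :: "real \<Rightarrow> pt \<Rightarrow> pt list \<Rightarrow> real" where
  "path_cost v c ps = sum_list (map2 (seg_cost v c) ps (tl ps))"

definition travel_time :: "real \<Rightarrow> pt \<Rightarrow> pt \<Rightarrow> pt \<Rightarrow> real" where
  "travel_time v c p q =
     Inf {path_cost v c ps | ps. ps \<noteq> [] \<and> hd ps = p \<and> last ps = q}"

definition ecc :: "real \<Rightarrow> pt \<Rightarrow> pt \<Rightarrow> pt set \<Rightarrow> real" where
  "ecc v c s S = Max ((\<lambda>q. travel_time v c s q) ` S)"

definition tt_diam :: "real \<Rightarrow> pt \<Rightarrow> pt set \<Rightarrow> real" where
  "tt_diam v c S = Max ((\<lambda>(p, q). travel_time v c p q) ` (S \<times> S))"

end

theory Submission
  imports Defs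
begin

text \<open>Travel time is a pseudometric: reversing a path keeps its time and concatenating paths
  adds times. Hence, for every cross, the travel-time diameter of \<open>S\<close> is at most twice the
  eccentricity of \<open>s\<close>, which in turn is at most the diameter. Minimality of the eccentricity
  for the cross at \<open>cs\<close> gives
  \<open>tt_diam cs \<le> 2 ecc cs \<le> 2 ecc c \<le> 2 tt_diam c\<close>.\<close>

lemma path_cost_Nil [simp]: "path_cost v c [] = 0"
  and path_cost_singleton [simp]: "path_cost v c [p] = 0"
  and path_cost_Cons_Cons [simp]:
    "path_cost v c (p # q # ps) = seg_cost v c p q + path_cost v c (q # ps)"
  by (simp_all add: path_cost_def)

lemma seg_cost_commute: "seg_cost v c p q = seg_cost v c q p"
  unfolding seg_cost_def on_same_line_def l1_def by (auto simp: abs_minus_commute)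

lemma seg_cost_nonneg: "v > 0 \<Longrightarrow> seg_cost v c p q \<ge> 0"
  unfolding seg_cost_def l1_def by auto

lemma path_cost_nonneg: "v > 0 \<Longrightarrow> path_cost v c ps \<ge> 0"
  by (induction ps rule: induct_list012) (auto simp: seg_cost_nonneg)

lemma path_cost_append:
  "path_cost v c (xs @ p # ys) = path_cost v c (xs @ [p]) + path_cost v c (p # ys)"
  by (induction xs rule: induct_list012) auto

lemma path_cost_rev: "path_cost v c (rev ps) = path_cost v c ps"
proof (induction ps rule: induct_list012)
  case (3 p q ps)
  have "path_cost v c (rev (p # q # ps)) = path_cost v c (rev (q # ps)) + seg_cost v c q p"
    using path_cost_append[of v c "rev ps" q "[p]"] by simp
  also have "\<dots> = path_cost v c (p # q # ps)"
    using "3.IH"(2) by (simp add: seg_cost_commute[of v c q p])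
  finally show ?case .
qed simp_all

definition path_costs :: "real \<Rightarrow> pt \<Rightarrow> pt \<Rightarrow> pt \<Rightarrow> real set" where
  "path_costs v c p q = {path_cost v c ps | ps. ps \<noteq> [] \<and> hd ps = p \<and> last ps = q}"

lemma travel_time_eq_Inf_path_costs: "travel_time v c p q = Inf (path_costs v c p q)"
  unfolding travel_time_def path_costs_def ..

lemma path_costs_nonempty: "path_costs v c p q \<noteq> {}"
  unfolding path_costs_def by (auto intro!: exI[of _ "[p, q]"])

lemma bdd_below_path_costs: "v > 0 \<Longrightarrow> bdd_below (path_costs v c p q)"
  unfolding path_costs_def bdd_below_def using path_cost_nonneg by blast

lemma path_costs_commute: "path_costs v c p q = path_costs v c q p"
proof -
  have "path_costs v c p q \<subseteq> path_costs v c q p" for p q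
    unfolding path_costs_def
    by (force intro: exI[of _ "rev ps" for ps] simp: path_cost_rev hd_rev last_rev)
  then show ?thesis by blast
qed

lemma path_costs_add:
  assumes "x \<in> path_costs v c p q" and "y \<in> path_costs v c q r"
  shows "x + y \<in> path_costs v c p r"
proof -
  obtain ps where ps: "ps \<noteq> []" "hd ps = p" "last ps = q" "x = path_cost v c ps"
    using assms(1) unfolding path_costs_def by blast
  obtain qs where qs: "qs \<noteq> []" "hd qs = q" "last qs = r" "y = path_cost v c qs"
    using assms(2) unfolding path_costs_def by blast
  have ps_eq: "butlast ps @ [q] = ps"
    using ps(1,3) by (metis append_butlast_last_id)
  have qs_eq: "q # tl qs = qs"
    using qs(1,2) by (metis list.collapse)
  let ?glued = "butlast ps @ q # tl qs"
  have "path_cost v c ?glued = path_cost v c (butlast ps @ [q]) + path_cost v c (q # tl qs)"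
    by (rule path_cost_append)
  moreover have "hd ?glued = hd (butlast ps @ [q])"
    by (cases "butlast ps") simp_all
  moreover have "last ?glued = last (q # tl qs)"
    by simp
  ultimately have "path_cost v c ?glued = x + y" "hd ?glued = p" "last ?glued = r"
    using ps_eq qs_eq ps(2,4) qs(3,4) by simp_all
  then show ?thesis
    unfolding path_costs_def by (intro CollectI exI[of _ ?glued]) simp
qed

lemma cInf_le_add_cInf:
  fixes A B C :: "real set"
  assumes "A \<noteq> {}" and "B \<noteq> {}" and "bdd_below C"
    and "\<And>x y. x \<in> A \<Longrightarrow> y \<in> B \<Longrightarrow> x + y \<in> C"
  shows "Inf C \<le> Inf A + Inf B"
proof -
  have "Inf C - x \<le> Inf B" if "x \<in> A" for x
  proof (intro cInf_greatest)
    fix y assume "y \<in> B"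
    then show "Inf C - x \<le> y"
      using cInf_lower[OF assms(4)[OF that \<open>y \<in> B\<close>] assms(3)] by simp
  qed (rule assms(2))
  then have "Inf C - Inf B \<le> Inf A"
    using assms(1) by (intro cInf_greatest) (auto simp: algebra_simps)
  then show ?thesis by simp
qed

lemma travel_time_commute: "travel_time v c p q = travel_time v c q p"
  by (simp add: travel_time_eq_Inf_path_costs path_costs_commute)

lemma travel_time_triangle:
  "v > 0 \<Longrightarrow> travel_time v c p r \<le> travel_time v c p q + travel_time v c q r"
  unfolding travel_time_eq_Inf_path_costs
  by (intro cInf_le_add_cInf path_costs_nonempty bdd_below_path_costs path_costs_add)

lemma tt_diam_le_twice_ecc:
  assumes "finite S" and "s \<in> S" and "v > 0"
  shows "tt_diam v c S \<le> 2 * ecc v c s S"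
proof -
  have ecc_ge: "travel_time v c s q \<le> ecc v c s S" if "q \<in> S" for q
    unfolding ecc_def using assms(1) that by (intro Max_ge) auto
  have "travel_time v c p q \<le> 2 * ecc v c s S" if "p \<in> S" "q \<in> S" for p q
  proof -
    have "travel_time v c p q \<le> travel_time v c s p + travel_time v c s q"
      using travel_time_triangle[OF assms(3), of c p q s] by (simp add: travel_time_commute)
    then show ?thesis using ecc_ge[OF that(1)] ecc_ge[OF that(2)] by simp
  qed
  then show ?thesis
    unfolding tt_diam_def using assms(1,2) by (subst Max_le_iff) auto
qed

lemma ecc_le_tt_diam:
  assumes "finite S" and "s \<in> S"
  shows "ecc v c s S \<le> tt_diam v c S"
  unfolding ecc_def tt_diam_def using assms by (intro Max_mono) force+

theorem lemma4:
  fixes S :: "pt set" and v :: real and s cs :: pt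
  assumes "finite S" and "card S \<ge> 3" and "v > 1" and "s \<in> S"
    and "\<forall>c. ecc v cs s S \<le> ecc v c s S"
  shows "\<forall>c. tt_diam v cs S \<le> 2 * tt_diam v c S"
proof
  fix c
  have "tt_diam v cs S \<le> 2 * ecc v cs s S"
    using assms(1,3,4) by (intro tt_diam_le_twice_ecc) auto
  also have "\<dots> \<le> 2 * ecc v c s S"
    using spec[OF assms(5), of c] by simp
  also have "\<dots> \<le> 2 * tt_diam v c S"
    using ecc_le_tt_diam[OF assms(1,4)] by simp
  finally show "tt_diam v cs S \<le> 2 * tt_diam v c S" .
qed

end
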